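(* Let $A\in\mathbb{R}^{n\times n}$, $B\in\mathbb{R}^n$, $n\ge2$. For $k=1,\dots,n-1$ let $\mathrm{an}_k\in\mathbb{R}^{(n-k)\times(n-k+1)}$ have full row rank $n-k$, and set $M_k=\mathrm{an}_k\mathrm{an}_{k-1}\cdots\mathrm{an}_1\in\mathbb{R}^{(n-k)\times n}$, $B_0=B$, $B_k=M_kA^kB$; assume $\mathrm{an}_kB_{k-1}=0$ for each $k$ (equivalently $M_kA^{k-1}B=0$). If $(A,B)$ is controllable, then for every $k=0,1,\dots,n-1$ the vectors $M_kA^kB,\,M_kA^{k+1}B,\dots,M_kA^{n-1}B$ (with $M_0=I_n$) are linearly independent, i.e. span a space of dimension $n-k$; in particular $B_k\neq0$ for all $k$. Equivalently, if $B_k=0$ for some $k$, then $\operatorname{rank}(B\;AB\;\cdots\;A^{n-1}B)<n$.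
   Context: $(A,B)$ controllable means the controllability matrix $(B\;AB\;\cdots\;A^{n-1}B)$ has rank $n$. *)

theory Defs
  imports "Jordan_Normal_Form.DL_Rank"
begin

fun Mprod :: "nat \<Rightarrow> (nat \<Rightarrow> real mat) \<Rightarrow> nat \<Rightarrow> real mat" where
  "Mprod n an 0 = 1\<^sub>m n"
| "Mprod n an (Suc k) = an (Suc k) * Mprod n an k"

definition ctrb_mat :: "nat \<Rightarrow> real mat \<Rightarrow> real vec \<Rightarrow> real mat" where
  "ctrb_mat n A B = mat_of_cols n (map (\<lambda>j. (A ^\<^sub>m j) *\<^sub>v B) [0..<n])"

definition controllable :: "nat \<Rightarrow> real mat \<Rightarrow> real vec \<Rightarrow> bool" where
  "controllable n A B \<longleftrightarrow> vec_space.rank n (ctrb_mat n A B) = n"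

end

theory Submission
  imports Defs
begin

text \<open>
  Let R_k be the square matrix of size n - k with columns M_k A^k B, ..., M_k A^(n-1) B;
  R_0 is the controllability matrix, invertible by assumption. Since M_(k+1) = an_(k+1) M_k,
  the product an_(k+1) R_k has first column an_(k+1) B_k = 0 and its remaining columns form
  R_(k+1). If R_k is invertible, an_(k+1) R_k has the same column space as an_(k+1), whose rank
  is n - k - 1, and dropping a zero column does not change the column space; so R_(k+1) is
  invertible too. Invertibility of R_k is the claimed linear independence.
\<close>

lemma mult_mat_vec_surj_if_det_ne_0:
  fixes P :: "'a :: field mat"
  assumes P: "P \<in> carrier_mat m m" and det: "det P \<noteq> 0" and x: "x \<in> carrier_vec m"
  shows "x \<in> (\<lambda>z. P *\<^sub>v z) ` carrier_vec m"
proof -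
  from det_non_zero_imp_unit[OF P det, unfolded Units_def, of "()"]
  obtain Q where Q: "Q \<in> carrier_mat m m" and PQ: "P * Q = 1\<^sub>m m"
    by (auto simp: ring_mat_def)
  have "P *\<^sub>v (Q *\<^sub>v x) = x"
    using assoc_mult_mat_vec[OF P Q x] PQ x by simp
  with Q x show ?thesis by (metis image_eqI mult_mat_vec_carrier)
qed

lemma image_mult_mat_vec_mult_right:
  fixes C P :: "'a :: field mat"
  assumes C: "C \<in> carrier_mat r m" and P: "P \<in> carrier_mat m m" and det: "det P \<noteq> 0"
  shows "(\<lambda>x. (C * P) *\<^sub>v x) ` carrier_vec m = (\<lambda>y. C *\<^sub>v y) ` carrier_vec m"
proof -
  have "(\<lambda>x. (C * P) *\<^sub>v x) ` carrier_vec m = (\<lambda>y. C *\<^sub>v y) ` ((\<lambda>x. P *\<^sub>v x) ` carrier_vec m)"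
    using assoc_mult_mat_vec[OF C P] by (auto simp: image_image)
  also have "(\<lambda>x. P *\<^sub>v x) ` carrier_vec m = carrier_vec m"
    using mult_mat_vec_surj_if_det_ne_0[OF P det] P by auto
  finally show ?thesis .
qed

lemma (in vec_space) rank_eq_if_image_eq:
  assumes A: "A \<in> carrier_mat n m" and B: "B \<in> carrier_mat n m'"
    and image: "(\<lambda>x. A *\<^sub>v x) ` carrier_vec m = (\<lambda>y. B *\<^sub>v y) ` carrier_vec m'"
  shows "rank A = rank B"
proof -
  have "col_space A = (\<lambda>x. A *\<^sub>v x) ` carrier_vec m"
    using col_space_eq[OF A] A by auto
  moreover have "col_space B = (\<lambda>y. B *\<^sub>v y) ` carrier_vec m'"
    using col_space_eq[OF B] B by auto
  ultimately show ?thesis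
    using image unfolding rank_def col_space_def by simp
qed

definition drop_first_col :: "'a mat \<Rightarrow> 'a mat" where
  "drop_first_col X = mat (dim_row X) (dim_col X - 1) (\<lambda>(i, j). X $$ (i, Suc j))"

lemma drop_first_col_carrier:
  "X \<in> carrier_mat r (Suc m) \<Longrightarrow> drop_first_col X \<in> carrier_mat r m"
  unfolding drop_first_col_def by auto

lemma mult_mat_vec_drop_first_col:
  fixes X :: "'a :: comm_ring mat"
  assumes X: "X \<in> carrier_mat r (Suc m)" and col0: "col X 0 = 0\<^sub>v r"
    and x: "x \<in> carrier_vec (Suc m)"
  shows "X *\<^sub>v x = drop_first_col X *\<^sub>v vec m (\<lambda>j. x $ Suc j)"
proof (rule eq_vecI)
  fix i assume "i < dim_vec (drop_first_col X *\<^sub>v vec m (\<lambda>j. x $ Suc j))"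
  then have i: "i < r" using X by (simp add: drop_first_col_def)
  have "X $$ (i, 0) = 0" using col0 i X by (metis col_def carrier_matD(1) index_vec index_zero_vec(1))
  then show "(X *\<^sub>v x) $ i = (drop_first_col X *\<^sub>v vec m (\<lambda>j. x $ Suc j)) $ i"
    using i X x
    by (simp add: drop_first_col_def scalar_prod_def atLeast0LessThan sum.lessThan_Suc_shift
        del: sum.lessThan_Suc)
qed (use X in \<open>simp add: drop_first_col_def\<close>)

lemma image_drop_first_col:
  fixes X :: "'a :: comm_ring mat"
  assumes X: "X \<in> carrier_mat r (Suc m)" and col0: "col X 0 = 0\<^sub>v r"
  shows "(\<lambda>y. drop_first_col X *\<^sub>v y) ` carrier_vec m
    = (\<lambda>x. X *\<^sub>v x) ` carrier_vec (Suc m)"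
proof (intro equalityI subsetI)
  fix v assume "v \<in> (\<lambda>y. drop_first_col X *\<^sub>v y) ` carrier_vec m"
  then obtain y where y: "y \<in> carrier_vec m" and v: "v = drop_first_col X *\<^sub>v y" by blast
  have "vec m (\<lambda>j. vCons 0 y $ Suc j) = y" using y by auto
  then have "v = X *\<^sub>v vCons 0 y"
    using mult_mat_vec_drop_first_col[OF X col0, of "vCons 0 y"] y v by (simp add: vCons_def)
  with y show "v \<in> (\<lambda>x. X *\<^sub>v x) ` carrier_vec (Suc m)" by (simp add: vCons_def)
next
  fix v assume "v \<in> (\<lambda>x. X *\<^sub>v x) ` carrier_vec (Suc m)"
  with mult_mat_vec_drop_first_col[OF X col0]
  show "v \<in> (\<lambda>y. drop_first_col X *\<^sub>v y) ` carrier_vec m" by fastforce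
qed

lemma det_drop_first_col_ne_0:
  fixes C P :: "'a :: field mat"
  assumes C: "C \<in> carrier_mat m (Suc m)" and rank: "vec_space.rank m C = m"
    and P: "P \<in> carrier_mat (Suc m) (Suc m)" and det: "det P \<noteq> 0"
    and col0: "col (C * P) 0 = 0\<^sub>v m"
  shows "det (drop_first_col (C * P)) \<noteq> 0"
proof -
  have CP: "C * P \<in> carrier_mat m (Suc m)" using C P by simp
  have drop: "drop_first_col (C * P) \<in> carrier_mat m m"
    using drop_first_col_carrier[OF CP] .
  have "(\<lambda>y. drop_first_col (C * P) *\<^sub>v y) ` carrier_vec m
      = (\<lambda>y. C *\<^sub>v y) ` carrier_vec (Suc m)"
    using image_drop_first_col[OF CP col0] image_mult_mat_vec_mult_right[OF C P det] by simp
  then have "vec_space.rank m (drop_first_col (C * P)) = m"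
    using vec_space.rank_eq_if_image_eq[OF drop C] rank by simp
  then show ?thesis using vec_space.det_rank_iff[OF drop] by simp
qed

lemma coeff_zero_if_det_ne_0:
  fixes P :: "'a :: field mat"
  assumes P: "P \<in> carrier_mat m m" and det: "det P \<noteq> 0"
    and comb: "\<And>i. i < m \<Longrightarrow> (\<Sum>j<m. c j * P $$ (i, j)) = 0" and j: "j < m"
  shows "c j = 0"
proof -
  have "P *\<^sub>v vec m c = 0\<^sub>v m"
    using P comb by (intro eq_vecI) (auto simp: scalar_prod_def atLeast0LessThan mult.commute)
  then have "vec m c = 0\<^sub>v m" using det_0_iff_vec_prod_zero_field[OF P] det vec_carrier by blast
  then show ?thesis using j by (metis index_vec index_zero_vec(1))
qed

locale annihilator_chain =
  fixes n :: nat and A :: "real mat" and B :: "real vec" and an :: "nat \<Rightarrow> real mat"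
  assumes A: "A \<in> carrier_mat n n" and B: "B \<in> carrier_vec n"
    and an_carrier: "\<And>k. 1 \<le> k \<Longrightarrow> k \<le> n - 1 \<Longrightarrow> an k \<in> carrier_mat (n - k) (n - k + 1)"
    and an_rank: "\<And>k. 1 \<le> k \<Longrightarrow> k \<le> n - 1 \<Longrightarrow> vec_space.rank (n - k) (an k) = n - k"
    and an_annihilates: "\<And>k. 1 \<le> k \<Longrightarrow> k \<le> n - 1 \<Longrightarrow>
           an k *\<^sub>v (Mprod n an (k - 1) *\<^sub>v ((A ^\<^sub>m (k - 1)) *\<^sub>v B)) = 0\<^sub>v (n - k)"
begin

lemma power_mult_B_carrier: "A ^\<^sub>m j *\<^sub>v B \<in> carrier_vec n"
  using A B by (meson mult_mat_vec_carrier pow_carrier_mat)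

lemma Mprod_carrier: "k \<le> n - 1 \<Longrightarrow> Mprod n an k \<in> carrier_mat (n - k) n"
proof (induction k)
  case (Suc k)
  then have "an (Suc k) \<in> carrier_mat (n - Suc k) (n - k)"
    using an_carrier[of "Suc k"] by (simp add: Suc_diff_Suc)
  with Suc show ?case by simp
qed simp

definition reduced_ctrb_mat :: "nat \<Rightarrow> real mat" where
  "reduced_ctrb_mat k =
     mat (n - k) (n - k) (\<lambda>(i, j). (Mprod n an k *\<^sub>v (A ^\<^sub>m (k + j) *\<^sub>v B)) $ i)"

lemma reduced_ctrb_mat_carrier: "reduced_ctrb_mat k \<in> carrier_mat (n - k) (n - k)"
  by (simp add: reduced_ctrb_mat_def)

lemma reduced_ctrb_mat_0: "reduced_ctrb_mat 0 = ctrb_mat n A B"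
  using power_mult_B_carrier
  by (intro eq_matI) (auto simp: reduced_ctrb_mat_def ctrb_mat_def mat_of_cols_index
      simp del: index_mult_mat_vec)

lemma an_mult_reduced_ctrb_mat:
  assumes k: "Suc k \<le> n - 1"
  shows "an (Suc k) * reduced_ctrb_mat k
    = mat (n - Suc k) (n - k) (\<lambda>(i, j). (Mprod n an (Suc k) *\<^sub>v (A ^\<^sub>m (k + j) *\<^sub>v B)) $ i)"
proof -
  have an: "an (Suc k) \<in> carrier_mat (n - Suc k) (n - k)"
    using an_carrier[of "Suc k"] k by (simp add: Suc_diff_Suc)
  have M: "Mprod n an k \<in> carrier_mat (n - k) n" using Mprod_carrier k by simp
  have "col (reduced_ctrb_mat k) j = Mprod n an k *\<^sub>v (A ^\<^sub>m (k + j) *\<^sub>v B)" if "j < n - k" for j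
    using that M power_mult_B_carrier by (intro eq_vecI) (auto simp: reduced_ctrb_mat_def)
  then show ?thesis
    using an M power_mult_B_carrier reduced_ctrb_mat_carrier[of k]
    by (intro eq_matI) auto
qed

lemma reduced_ctrb_mat_Suc:
  assumes k: "Suc k \<le> n - 1"
  shows "reduced_ctrb_mat (Suc k) = drop_first_col (an (Suc k) * reduced_ctrb_mat k)"
  unfolding an_mult_reduced_ctrb_mat[OF k] unfolding drop_first_col_def reduced_ctrb_mat_def
  by (intro eq_matI) (auto simp del: Mprod.simps pow_mat.simps)

lemma col_an_mult_reduced_ctrb_mat_0:
  assumes k: "Suc k \<le> n - 1"
  shows "col (an (Suc k) * reduced_ctrb_mat k) 0 = 0\<^sub>v (n - Suc k)"
proof -
  have an: "an (Suc k) \<in> carrier_mat (n - Suc k) (n - k)"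
    using an_carrier[of "Suc k"] k by (simp add: Suc_diff_Suc)
  have "Mprod n an (Suc k) *\<^sub>v (A ^\<^sub>m k *\<^sub>v B) = 0\<^sub>v (n - Suc k)"
    using an_annihilates[of "Suc k"] k Mprod_carrier[of k] an power_mult_B_carrier by simp
  then show ?thesis
    using k by (intro eq_vecI) (auto simp: an_mult_reduced_ctrb_mat)
qed

lemma det_reduced_ctrb_mat_ne_0:
  assumes ctrb: "controllable n A B" and k: "k \<le> n - 1"
  shows "det (reduced_ctrb_mat k) \<noteq> 0"
  using k
proof (induction k)
  case 0
  have "ctrb_mat n A B \<in> carrier_mat n n" by (simp add: ctrb_mat_def mat_of_cols_def)
  from vec_space.det_rank_iff[OF this] show ?case
    using ctrb reduced_ctrb_mat_0 unfolding controllable_def by simp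
next
  case (Suc k)
  then have nk: "n - k = Suc (n - Suc k)" by simp
  have an: "an (Suc k) \<in> carrier_mat (n - Suc k) (Suc (n - Suc k))"
    using an_carrier[of "Suc k"] Suc.prems by simp
  have rank: "vec_space.rank (n - Suc k) (an (Suc k)) = n - Suc k"
    using an_rank[of "Suc k"] Suc.prems by simp
  have P: "reduced_ctrb_mat k \<in> carrier_mat (Suc (n - Suc k)) (Suc (n - Suc k))"
    using reduced_ctrb_mat_carrier[of k] nk by simp
  show ?case
    using det_drop_first_col_ne_0[OF an rank P] Suc col_an_mult_reduced_ctrb_mat_0 reduced_ctrb_mat_Suc
    by simp
qed

lemma reduced_ctrb_cols_lin_indpt:
  assumes ctrb: "controllable n A B" and k: "k \<le> n - 1"
    and comb: "\<forall>i < n - k. (\<Sum>j = k..<n. c j * (Mprod n an k *\<^sub>v (A ^\<^sub>m j *\<^sub>v B)) $ i) = 0"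
    and j: "j \<in> {k..<n}"
  shows "c j = 0"
proof -
  have "(\<Sum>l<n - k. c (k + l) * reduced_ctrb_mat k $$ (i, l)) = 0" if i: "i < n - k" for i
  proof -
    have "(\<Sum>l<n - k. c (k + l) * reduced_ctrb_mat k $$ (i, l))
        = (\<Sum>l = 0..<n - k. c (l + k) * (Mprod n an k *\<^sub>v (A ^\<^sub>m (l + k) *\<^sub>v B)) $ i)"
      using i by (intro sum.cong) (auto simp: reduced_ctrb_mat_def add.commute)
    also have "\<dots> = (\<Sum>j = k..<n. c j * (Mprod n an k *\<^sub>v (A ^\<^sub>m j *\<^sub>v B)) $ i)"
      using k sum.shift_bounds_nat_ivl[of "\<lambda>j. c j * (Mprod n an k *\<^sub>v (A ^\<^sub>m j *\<^sub>v B)) $ i"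
          0 k "n - k"]
      by simp
    finally show ?thesis using comb i by simp
  qed
  from coeff_zero_if_det_ne_0[OF reduced_ctrb_mat_carrier det_reduced_ctrb_mat_ne_0[OF ctrb k] this,
      of "j - k"]
  show ?thesis using j by (simp add: diff_less_mono)
qed

lemma Mprod_power_mult_B_ne_0:
  assumes ctrb: "controllable n A B" and k: "k < n"
  shows "Mprod n an k *\<^sub>v (A ^\<^sub>m k *\<^sub>v B) \<noteq> 0\<^sub>v (n - k)"
proof
  assume "Mprod n an k *\<^sub>v (A ^\<^sub>m k *\<^sub>v B) = 0\<^sub>v (n - k)"
  then have "\<forall>i < n - k.
      (\<Sum>j = k..<n. (if j = k then 1 else 0) * (Mprod n an k *\<^sub>v (A ^\<^sub>m j *\<^sub>v B)) $ i) = 0"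
    using k by (simp add: if_distrib)
  moreover have "k \<le> n - 1" "k \<in> {k..<n}" using k by auto
  ultimately show False
    using reduced_ctrb_cols_lin_indpt[OF ctrb,
        where k = k and c = "\<lambda>j. if j = k then 1 else 0" and j = k]
    by simp
qed

end

theorem mainTheorem12:
  fixes n :: nat and A :: "real mat" and B :: "real vec" and an :: "nat \<Rightarrow> real mat"
  assumes "n \<ge> 2"
    and "A \<in> carrier_mat n n"
    and "B \<in> carrier_vec n"
    and "\<And>k. 1 \<le> k \<Longrightarrow> k \<le> n - 1 \<Longrightarrow> an k \<in> carrier_mat (n - k) (n - k + 1)"
    and "\<And>k. 1 \<le> k \<Longrightarrow> k \<le> n - 1 \<Longrightarrow> vec_space.rank (n - k) (an k) = n - k"
    and "\<And>k. 1 \<le> k \<Longrightarrow> k \<le> n - 1 \<Longrightarrow>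
           an k *\<^sub>v (Mprod n an (k - 1) *\<^sub>v ((A ^\<^sub>m (k - 1)) *\<^sub>v B)) = 0\<^sub>v (n - k)"
    and "controllable n A B"
  shows "\<forall>k \<le> n - 1.
           (\<forall>c :: nat \<Rightarrow> real.
              (\<forall>i < n - k. (\<Sum>j = k..<n. c j * ((Mprod n an k *\<^sub>v ((A ^\<^sub>m j) *\<^sub>v B)) $ i)) = 0)
              \<longrightarrow> (\<forall>j \<in> {k..<n}. c j = 0))
           \<and> Mprod n an k *\<^sub>v ((A ^\<^sub>m k) *\<^sub>v B) \<noteq> 0\<^sub>v (n - k)"
proof (intro allI impI, rule conjI)
  interpret annihilator_chain n A B an
    using assms(2-6) by unfold_locales
  fix k assume k: "k \<le> n - 1"
  then show "\<forall>c :: nat \<Rightarrow> real.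
      (\<forall>i < n - k. (\<Sum>j = k..<n. c j * ((Mprod n an k *\<^sub>v ((A ^\<^sub>m j) *\<^sub>v B)) $ i)) = 0)
      \<longrightarrow> (\<forall>j \<in> {k..<n}. c j = 0)"
    using reduced_ctrb_cols_lin_indpt[OF assms(7)] by blast
  show "Mprod n an k *\<^sub>v ((A ^\<^sub>m k) *\<^sub>v B) \<noteq> 0\<^sub>v (n - k)"
    using Mprod_power_mult_B_ne_0[OF assms(7)] k assms(1) by simp
qed

end
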